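(* Let $\mathcal{H}$ be a real Hilbert space, $N\ge2$, $A_1:\mathcal{H}\rightrightarrows\mathcal{H}$ maximally monotone, and for $\delta,\gamma\in\mathbb{R}_{++}$ define $\tilde{\mathcal{Q}}_{\delta\leftarrow\gamma}=(\tilde{\mathcal{Q}}^1_{\delta\leftarrow\gamma},\dots,\tilde{\mathcal{Q}}^{N-1}_{\delta\leftarrow\gamma}):\mathcal{H}^{N-1}\to\mathcal{H}^{N-1}$ by $\tilde{\mathcal{Q}}^1_{\delta\leftarrow\gamma}\mathbf{x}=\frac{\delta}{\gamma}x^1+(1-\frac{\delta}{\gamma})J_{\gamma A_1}x^1$ and $\tilde{\mathcal{Q}}^i_{\delta\leftarrow\gamma}\mathbf{x}=\frac{\delta}{\gamma}(x^i-x^1)+\tilde{\mathcal{Q}}^1_{\delta\leftarrow\gamma}\mathbf{x}$ for $i=2,\dots,N-1$, where $\mathbf{x}=(x^1,\dots,x^{N-1})$. Then $\tilde{\mathcal{Q}}_{\delta\leftarrow\gamma}$ is Lipschitz continuous (with respect to the product norm on $\mathcal{H}^{N-1}$) with constant $$\check{\mathcal{L}}_{\delta\leftarrow\gamma}=\frac{\sqrt{\delta}}{\sqrt{\gamma}}+\frac{\sqrt{|\gamma-\delta|}}{\sqrt{\gamma}}\max\Big\{\sqrt{N-1},\ \sqrt{2N}\sqrt{\tfrac{\delta}{\gamma}}\Big\}.$$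
   Context: $J_{A}=(\mathrm{Id}+A)^{-1}$ is the resolvent; the norm on $\mathcal{H}^{N-1}$ is $\|\mathbf{x}\|^2=\sum_{i=1}^{N-1}\|x^i\|^2$. *)

theory Defs
  imports "HOL-Analysis.Analysis"
begin

definition monotone_op :: "('a::real_inner \<Rightarrow> 'a set) \<Rightarrow> bool" where
  "monotone_op A \<longleftrightarrow> (\<forall>x y u v. u \<in> A x \<longrightarrow> v \<in> A y \<longrightarrow> inner (x - y) (u - v) \<ge> 0)"

definition maximal_monotone :: "('a::real_inner \<Rightarrow> 'a set) \<Rightarrow> bool" where
  "maximal_monotone A \<longleftrightarrow> monotone_op A \<and>
     (\<forall>B. monotone_op B \<longrightarrow> (\<forall>x. A x \<subseteq> B x) \<longrightarrow> B = A)"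

text \<open>Resolvent J_{gamma A} = (Id + gamma A)^{-1}: p = J x iff x \<in> p + gamma A p.
  For maximally monotone A and gamma > 0 this is single-valued with full domain (Minty).\<close>
definition resolvent :: "real \<Rightarrow> ('a::real_inner \<Rightarrow> 'a set) \<Rightarrow> 'a \<Rightarrow> 'a" where
  "resolvent g A x = (THE p. x \<in> (\<lambda>u. p + g *\<^sub>R u) ` A p)"

text \<open>Elements of H^{N-1} are functions nat \<Rightarrow> 'a, of which only indices 1..N-1 matter.\<close>
definition prod_norm :: "nat \<Rightarrow> (nat \<Rightarrow> 'a::real_normed_vector) \<Rightarrow> real" where
  "prod_norm N x = sqrt (\<Sum>i=1..N-1. (norm (x i))\<^sup>2)"

definition Q1 :: "real \<Rightarrow> real \<Rightarrow> ('a::real_inner \<Rightarrow> 'a set) \<Rightarrow> (nat \<Rightarrow> 'a) \<Rightarrow> 'a" where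
  "Q1 d g A x = (d / g) *\<^sub>R x 1 + (1 - d / g) *\<^sub>R resolvent g A (x 1)"

definition Qtilde :: "real \<Rightarrow> real \<Rightarrow> ('a::real_inner \<Rightarrow> 'a set) \<Rightarrow> (nat \<Rightarrow> 'a) \<Rightarrow> (nat \<Rightarrow> 'a)" where
  "Qtilde d g A x = (\<lambda>i. if i = 1 then Q1 d g A x
                          else (d / g) *\<^sub>R (x i - x 1) + Q1 d g A x)"

end

theory Submission
  imports Defs
begin

(* Component i of Qtilde x - Qtilde y is (d/g)(x^i - y^i) + (1 - d/g)(J x^1 - J y^1), where J is
   the resolvent of g A, so nonexpansiveness of J gives the Lipschitz constant
   d/g + |1 - d/g| sqrt (N - 1), and an elementary estimate bounds it by the stated one.

   J is nonexpansive once it is defined everywhere, i.e. once Id + g A is onto (Minty's theorem).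
   Surjectivity follows from maximality and the Debrunner-Flor lemma: for a monotone set G of pairs
   and any z there is p with <p - a, z - p - b> >= 0 for all (a, b) in G, that is, p lies in every
   ball with centre (a + z - b)/2 and radius |z - a - b|/2. For finitely many pairs, a point
   minimising the largest excess |p - c|^2 - r^2 over the hull of the centres is a convex
   combination of the active centres, and monotonicity makes the weighted average of the excesses
   at any convex combination of the centres nonpositive. Closed convex sets with the finite
   intersection property, one of them bounded, still meet in a Hilbert space: points of nearly
   minimal norm in larger and larger finite intersections are close by the parallelogram law. *)

section \<open>Balls attached to a monotone set of pairs\<close>

definition monotone_pairs :: "('a::real_inner \<times> 'a) set \<Rightarrow> bool" where
  "monotone_pairs G \<longleftrightarrow> (\<forall>e\<in>G. \<forall>e'\<in>G. 0 \<le> inner (fst e - fst e') (snd e - snd e'))"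

definition ball_excess :: "'a::real_normed_vector \<Rightarrow> real \<Rightarrow> 'a \<Rightarrow> real" where
  "ball_excess c r p = (norm (p - c))\<^sup>2 - r\<^sup>2"

definition minty_center :: "'a::real_inner \<Rightarrow> 'a \<times> 'a \<Rightarrow> 'a" where
  "minty_center z e = (1/2) *\<^sub>R (fst e + z - snd e)"

definition minty_radius :: "'a::real_inner \<Rightarrow> 'a \<times> 'a \<Rightarrow> real" where
  "minty_radius z e = norm (z - fst e - snd e) / 2"

lemma ball_excess_minty:
  "ball_excess (minty_center z e) (minty_radius z e) p = - inner (p - fst e) (z - p - snd e)"
  unfolding ball_excess_def minty_center_def minty_radius_def
  by (simp add: power2_norm_eq_inner inner_simps inner_commute algebra_simps power_divide;
      simp add: field_simps)

lemma mem_minty_cball_iff: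
  "p \<in> cball (minty_center z e) (minty_radius z e) \<longleftrightarrow> 0 \<le> inner (p - fst e) (z - p - snd e)"
proof -
  have "p \<in> cball (minty_center z e) (minty_radius z e)
      \<longleftrightarrow> (norm (p - minty_center z e))\<^sup>2 \<le> (minty_radius z e)\<^sup>2"
    by (simp add: dist_norm norm_minus_commute minty_radius_def abs_le_square_iff[symmetric])
  then show ?thesis
    using ball_excess_minty[of z e p] unfolding ball_excess_def by linarith
qed

lemma weighted_covariance_eq:
  fixes a b :: "'i \<Rightarrow> 'a::real_inner"
  assumes "sum u T = 1"
  shows "(\<Sum>v\<in>T. u v * inner (a v) (b v)) - inner (\<Sum>v\<in>T. u v *\<^sub>R a v) (\<Sum>v\<in>T. u v *\<^sub>R b v)
       = (1/2) * (\<Sum>v\<in>T. \<Sum>w\<in>T. u v * u w * inner (a v - a w) (b v - b w))"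
proof -
  have diag: "(\<Sum>v\<in>T. \<Sum>w\<in>T. u v * u w * inner (a v) (b v)) = (\<Sum>v\<in>T. u v * inner (a v) (b v))"
    "(\<Sum>v\<in>T. \<Sum>w\<in>T. u v * u w * inner (a w) (b w)) = (\<Sum>v\<in>T. u v * inner (a v) (b v))"
    by (simp_all add: assms mult.assoc mult.left_commute
        flip: sum_distrib_left sum_distrib_right)
  have cross: "(\<Sum>v\<in>T. \<Sum>w\<in>T. u v * u w * inner (a v) (b w))
      = inner (\<Sum>v\<in>T. u v *\<^sub>R a v) (\<Sum>v\<in>T. u v *\<^sub>R b v)"
    by (subst sum.swap)
      (simp add: inner_sum_left inner_sum_right mult.assoc sum_distrib_left mult.left_commute)
  have cross': "(\<Sum>v\<in>T. \<Sum>w\<in>T. u v * u w * inner (a w) (b v))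
      = inner (\<Sum>v\<in>T. u v *\<^sub>R a v) (\<Sum>v\<in>T. u v *\<^sub>R b v)"
    by (simp add: inner_sum_left inner_sum_right mult.assoc sum_distrib_left mult.left_commute)
  have "(\<Sum>v\<in>T. \<Sum>w\<in>T. u v * u w * inner (a v - a w) (b v - b w))
     = (\<Sum>v\<in>T. \<Sum>w\<in>T. u v * u w * inner (a v) (b v))
       + (\<Sum>v\<in>T. \<Sum>w\<in>T. u v * u w * inner (a w) (b w))
       - (\<Sum>v\<in>T. \<Sum>w\<in>T. u v * u w * inner (a v) (b w))
       - (\<Sum>v\<in>T. \<Sum>w\<in>T. u v * u w * inner (a w) (b v))"
    by (simp add: inner_diff_left inner_diff_right algebra_simps sum.distrib sum_subtractf)
  then show ?thesis using diag cross cross' by simp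
qed

lemma monotone_pairs_weighted_excess_nonpos:
  assumes mono: "monotone_pairs S" and u0: "\<forall>e\<in>S. 0 \<le> u e" and u1: "sum u S = 1"
  shows "(\<Sum>e\<in>S. u e * ball_excess (minty_center z e) (minty_radius z e)
            (\<Sum>e'\<in>S. u e' *\<^sub>R minty_center z e')) \<le> 0"
proof -
  define p where "p = (\<Sum>e\<in>S. u e *\<^sub>R minty_center z e)"
  define a where "a = (\<Sum>e\<in>S. u e *\<^sub>R fst e)"
  define b where "b = (\<Sum>e\<in>S. u e *\<^sub>R snd e)"
  have "p = (1/2) *\<^sub>R (\<Sum>e\<in>S. u e *\<^sub>R fst e + u e *\<^sub>R z - u e *\<^sub>R snd e)"
    by (simp add: p_def minty_center_def scaleR_sum_right algebra_simps)
  also have "\<dots> = (1/2) *\<^sub>R (a + (\<Sum>e\<in>S. u e *\<^sub>R z) - b)"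
    by (simp add: a_def b_def sum.distrib sum_subtractf)
  also have "(\<Sum>e\<in>S. u e *\<^sub>R z) = z"
    using u1 by (simp flip: scaleR_sum_left)
  finally have p: "p = (1/2) *\<^sub>R (a + z - b)" .
  have "(\<Sum>e\<in>S. u e * inner (p - fst e) (z - p - snd e))
      = inner p (z - p) - inner p b - inner a (z - p) + (\<Sum>e\<in>S. u e * inner (fst e) (snd e))"
    by (simp add: inner_diff_left inner_diff_right algebra_simps sum.distrib sum_subtractf
        a_def b_def inner_sum_left inner_sum_right u1 flip: sum_distrib_right)
  also have "\<dots> = (norm ((1/2) *\<^sub>R (z - a - b)))\<^sup>2
      + ((\<Sum>e\<in>S. u e * inner (fst e) (snd e)) - inner a b)"
    unfolding p by (simp add: power2_norm_eq_inner inner_simps inner_commute algebra_simps;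
        simp add: field_simps)
  also have "\<dots> \<ge> 0"
  proof -
    have "0 \<le> (\<Sum>e\<in>S. \<Sum>e'\<in>S. u e * u e' * inner (fst e - fst e') (snd e - snd e'))"
      using mono u0 unfolding monotone_pairs_def by (intro sum_nonneg) simp
    then show ?thesis
      using weighted_covariance_eq[OF u1, of fst snd] unfolding a_def b_def by simp
  qed
  finally show ?thesis
    by (simp add: ball_excess_minty sum_negf flip: p_def)
qed

section \<open>Finitely many balls\<close>

definition max_ball_excess :: "('i \<Rightarrow> 'a::real_normed_vector) \<Rightarrow> ('i \<Rightarrow> real) \<Rightarrow> 'i set \<Rightarrow> 'a \<Rightarrow> real" where
  "max_ball_excess c r I p = Max ((\<lambda>i. ball_excess (c i) (r i) p) ` I)"

lemma convex_hull_image_weights: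
  fixes c :: "'i \<Rightarrow> 'a::real_vector"
  assumes "finite I" "J \<subseteq> I" "p \<in> convex hull (c ` J)"
  obtains u where "\<forall>i\<in>I. 0 \<le> u i" "\<forall>i\<in>I - J. u i = 0" "sum u I = 1"
    "(\<Sum>i\<in>I. u i *\<^sub>R c i) = p"
proof -
  define W where "W = {(\<Sum>i\<in>I. u i *\<^sub>R c i) | u.
    (\<forall>i\<in>I. 0 \<le> u i) \<and> (\<forall>i\<in>I - J. u i = 0) \<and> sum u I = 1}"
  have "c ` J \<subseteq> W"
  proof
    fix x assume "x \<in> c ` J"
    then obtain j where j: "j \<in> J" "x = c j" by blast
    then have "j \<in> I" using assms(2) by blast
    moreover have "(if i = j then 1 else 0 :: real) *\<^sub>R c i = (if i = j then c i else 0)" for i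
      by simp
    ultimately have "x = (\<Sum>i\<in>I. (if i = j then 1 else 0) *\<^sub>R c i)
        \<and> sum (\<lambda>i. if i = j then 1 else 0 :: real) I = 1"
      using j assms(1) by (simp add: sum.delta)
    then show "x \<in> W" unfolding W_def using j by force
  qed
  moreover have "convex W"
    unfolding convex_def
  proof (intro ballI allI impI)
    fix x y and s t :: real
    assume "x \<in> W" "y \<in> W" "0 \<le> s" "0 \<le> t" "s + t = 1"
    then obtain u v where
      u: "\<forall>i\<in>I. 0 \<le> u i" "\<forall>i\<in>I - J. u i = 0" "sum u I = 1" "x = (\<Sum>i\<in>I. u i *\<^sub>R c i)" and
      v: "\<forall>i\<in>I. 0 \<le> v i" "\<forall>i\<in>I - J. v i = 0" "sum v I = 1" "y = (\<Sum>i\<in>I. v i *\<^sub>R c i)"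
      unfolding W_def by blast
    have "s *\<^sub>R x + t *\<^sub>R y = (\<Sum>i\<in>I. (s * u i + t * v i) *\<^sub>R c i)"
      by (simp add: u(4) v(4) scaleR_sum_right scaleR_add_left sum.distrib)
    moreover have "sum (\<lambda>i. s * u i + t * v i) I = 1"
      using u(3) v(3) \<open>s + t = 1\<close> by (simp add: sum.distrib flip: sum_distrib_left)
    ultimately show "s *\<^sub>R x + t *\<^sub>R y \<in> W"
      unfolding W_def using u v \<open>0 \<le> s\<close> \<open>0 \<le> t\<close> by force
  qed
  ultimately have "convex hull (c ` J) \<subseteq> W" by (rule hull_minimal)
  with assms(3) that show thesis unfolding W_def by blast
qed

lemma continuous_on_Max_finite:
  fixes f :: "'i \<Rightarrow> 'a::topological_space \<Rightarrow> real"
  assumes "finite I" "I \<noteq> {}" "\<And>i. i \<in> I \<Longrightarrow> continuous_on S (f i)"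
  shows "continuous_on S (\<lambda>x. Max ((\<lambda>i. f i x) ` I))"
  using assms
proof (induction I rule: finite_ne_induct)
  case (insert i I)
  then show ?case by (simp add: Max_insert continuous_on_max)
qed simp

lemma norm_step_to_closest_point_less:
  fixes p y c :: "'a::real_inner"
  assumes D: "convex D" "closed D" "y \<in> D" "c \<in> D" and closest: "\<forall>x\<in>D. dist p y \<le> dist p x"
    and "p \<noteq> y" "0 < t" "t \<le> 1"
  shows "norm (p - t *\<^sub>R (p - y) - c) < norm (p - c)"
proof -
  define w where "w = p - y"
  have "inner (p - y) (c - y) \<le> 0" using any_closest_point_dot[OF D closest] .
  then have "(norm w)\<^sup>2 \<le> inner (p - c) w"
    unfolding w_def power2_norm_eq_inner by (simp add: inner_diff_left inner_diff_right inner_commute)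
  then have "2 * t * (norm w)\<^sup>2 \<le> 2 * t * inner (p - c) w"
    using \<open>0 < t\<close> by simp
  moreover have "t\<^sup>2 * (norm w)\<^sup>2 < 2 * t * (norm w)\<^sup>2"
    using assms(6-8) by (simp add: w_def power2_eq_square)
  ultimately have "(norm (p - c))\<^sup>2 - 2 * t * inner (p - c) w + t\<^sup>2 * (norm w)\<^sup>2 < (norm (p - c))\<^sup>2"
    by linarith
  also have "(norm (p - c))\<^sup>2 - 2 * t * inner (p - c) w + t\<^sup>2 * (norm w)\<^sup>2 = (norm (p - t *\<^sub>R w - c))\<^sup>2"
    unfolding power2_norm_eq_inner by (simp add: inner_simps inner_commute algebra_simps power2_eq_square)
  finally show ?thesis unfolding w_def by (simp add: power2_less_imp_less)
qed

lemma ball_excess_le_max: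
  "finite I \<Longrightarrow> i \<in> I \<Longrightarrow> ball_excess (c i) (r i) p \<le> max_ball_excess c r I p"
  unfolding max_ball_excess_def by (rule Max_ge) auto

lemma eventually_max_ball_excess_less:
  fixes c :: "'i \<Rightarrow> 'a::real_inner"
  assumes I: "finite I" "I \<noteq> {}"
    and D: "D = convex hull (c ` {i\<in>I. ball_excess (c i) (r i) p = max_ball_excess c r I p})"
    and y: "y \<in> D" "\<forall>x\<in>D. dist p y \<le> dist p x" and "p \<noteq> y"
  shows "\<forall>\<^sub>F t in at_right 0. max_ball_excess c r I (p - t *\<^sub>R (p - y)) < max_ball_excess c r I p"
proof -
  define \<mu> where "\<mu> = max_ball_excess c r I p"
  define q where "q t = p - t *\<^sub>R (p - y)" for t
  have "\<forall>\<^sub>F t in at_right 0. ball_excess (c i) (r i) (q t) < \<mu>" if "i \<in> I" for i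
  proof (cases "ball_excess (c i) (r i) p = \<mu>")
    case True
    have "c i \<in> D" unfolding D \<mu>_def[symmetric] using that True by (intro hull_inc) auto
    moreover have "closed D" unfolding D using I by (simp add: compact_imp_closed finite_imp_compact_convex_hull)
    ultimately have closer: "(norm (q t - c i))\<^sup>2 < (norm (p - c i))\<^sup>2" if "0 < t" "t < 1" for t
      unfolding q_def using that \<open>p \<noteq> y\<close> y
      by (intro power_strict_mono norm_step_to_closest_point_less[of D]) (auto simp: D)
    have "ball_excess (c i) (r i) (q t) < \<mu>" if "0 < t" "t < 1" for t
      using closer[OF that] True unfolding ball_excess_def by linarith
    then show ?thesis unfolding eventually_at_right_field by (intro exI[of _ 1]) auto
  next
    case False
    then have "ball_excess (c i) (r i) p < \<mu>"
      using ball_excess_le_max[where c = c and r = r and p = p, OF I(1) that]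
      unfolding \<mu>_def by linarith
    moreover have "((\<lambda>t. ball_excess (c i) (r i) (q t)) \<longlongrightarrow> ball_excess (c i) (r i) p) (at_right 0)"
      unfolding q_def ball_excess_def by (auto intro!: tendsto_eq_intros)
    ultimately show ?thesis by (simp add: order_tendstoD(2))
  qed
  then have "\<forall>\<^sub>F t in at_right 0. \<forall>i\<in>I. ball_excess (c i) (r i) (q t) < \<mu>"
    using I(1) by (intro eventually_ball_finite) auto
  then show ?thesis
    unfolding q_def[symmetric]
    by eventually_elim (use I in \<open>simp add: \<mu>_def max_ball_excess_def\<close>)
qed

lemma max_ball_excess_argmin_in_active_hull:
  fixes c :: "'i \<Rightarrow> 'a::real_inner"
  assumes I: "finite I" and p: "p \<in> convex hull (c ` I)"
    and min: "\<forall>q\<in>convex hull (c ` I). max_ball_excess c r I p \<le> max_ball_excess c r I q"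
  shows "p \<in> convex hull (c ` {i\<in>I. ball_excess (c i) (r i) p = max_ball_excess c r I p})"
    (is "p \<in> ?D")
proof (rule ccontr)
  assume "p \<notin> ?D"
  have "I \<noteq> {}" using p by auto
  then have "max_ball_excess c r I p \<in> (\<lambda>i. ball_excess (c i) (r i) p) ` I"
    unfolding max_ball_excess_def using I by (intro Max_in) auto
  then have "?D \<noteq> {}" by auto
  moreover have "compact ?D" using I by (simp add: finite_imp_compact_convex_hull)
  ultimately obtain y where y: "y \<in> ?D" "\<forall>x\<in>?D. dist p y \<le> dist p x"
    using continuous_attains_inf[of ?D "dist p"] continuous_on_dist[OF continuous_on_const continuous_on_id]
    by blast
  have "\<forall>\<^sub>F t in at_right 0. max_ball_excess c r I (p - t *\<^sub>R (p - y)) < max_ball_excess c r I p"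
    using y \<open>p \<notin> ?D\<close> by (intro eventually_max_ball_excess_less[OF I \<open>I \<noteq> {}\<close> refl]) auto
  moreover have "\<forall>\<^sub>F t in at_right 0. 0 < t \<and> t < (1::real)"
    unfolding eventually_at_right_field by (intro exI[of _ 1]) auto
  ultimately obtain t where t: "max_ball_excess c r I (p - t *\<^sub>R (p - y)) < max_ball_excess c r I p"
      "0 < t" "t < 1"
    using eventually_happens'[OF _ eventually_conj] trivial_limit_at_right_real
    unfolding trivial_limit_def by blast
  have "?D \<subseteq> convex hull (c ` I)" by (intro hull_mono) auto
  then have "(1 - t) *\<^sub>R p + t *\<^sub>R y \<in> convex hull (c ` I)"
    using p y(1) t(2,3) by (intro convexD) auto
  moreover have "(1 - t) *\<^sub>R p + t *\<^sub>R y = p - t *\<^sub>R (p - y)" by (simp add: algebra_simps)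
  ultimately show False using min t(1) by fastforce
qed

lemma finite_balls_common_point:
  fixes c :: "'i \<Rightarrow> 'a::real_inner"
  assumes I: "finite I"
    and avg: "\<And>u. \<forall>i\<in>I. 0 \<le> u i \<Longrightarrow> sum u I = 1 \<Longrightarrow>
      (\<Sum>i\<in>I. u i * ball_excess (c i) (r i) (\<Sum>j\<in>I. u j *\<^sub>R c j)) \<le> 0"
  shows "\<exists>p. \<forall>i\<in>I. ball_excess (c i) (r i) p \<le> 0"
proof (cases "I = {}")
  case False
  define C where "C = convex hull (c ` I)"
  have "continuous_on C (max_ball_excess c r I)"
    unfolding max_ball_excess_def[abs_def] ball_excess_def using I False
    by (intro continuous_on_Max_finite) (auto intro!: continuous_intros)
  moreover have "compact C" "C \<noteq> {}" unfolding C_def using I False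
    by (auto simp: finite_imp_compact_convex_hull)
  ultimately obtain p where p: "p \<in> C" and min: "\<forall>q\<in>C. max_ball_excess c r I p \<le> max_ball_excess c r I q"
    using continuous_attains_inf by blast
  define \<mu> where "\<mu> = max_ball_excess c r I p"
  obtain u where u: "\<forall>i\<in>I. 0 \<le> u i" "\<forall>i\<in>I - {i\<in>I. ball_excess (c i) (r i) p = \<mu>}. u i = 0"
      "sum u I = 1" "(\<Sum>i\<in>I. u i *\<^sub>R c i) = p"
    using convex_hull_image_weights[OF I _ max_ball_excess_argmin_in_active_hull[OF I]] p min
    unfolding C_def \<mu>_def by blast
  have "(\<Sum>i\<in>I. u i * ball_excess (c i) (r i) p) = (\<Sum>i\<in>I. u i * \<mu>)"
    using u(2) by (intro sum.cong) auto
  also have "\<dots> = \<mu>" using u(3) by (simp flip: sum_distrib_right)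
  finally have "\<mu> \<le> 0" using avg[OF u(1,3)] u(4) by simp
  then show ?thesis
    using ball_excess_le_max[OF I] unfolding \<mu>_def by (meson order_trans)
qed simp

lemma debrunner_flor_finite:
  fixes z :: "'a::real_inner"
  assumes "finite S" "monotone_pairs S"
  shows "\<exists>p. \<forall>e\<in>S. 0 \<le> inner (p - fst e) (z - p - snd e)"
  using finite_balls_common_point[OF assms(1), of "minty_center z" "minty_radius z"]
    monotone_pairs_weighted_excess_nonpos[OF assms(2)]
  by (simp add: ball_excess_minty)

section \<open>Closed convex sets in a Hilbert space\<close>

lemma convex_near_min_norm_dist:
  fixes p q :: "'a::real_inner"
  assumes "convex K" "p \<in> K" "q \<in> K" "\<forall>x\<in>K. r \<le> norm x" "0 \<le> r"
    and "norm p \<le> s" "norm q \<le> s"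
  shows "(norm (p - q))\<^sup>2 \<le> 4 * (s\<^sup>2 - r\<^sup>2)"
proof -
  have "(1/2) *\<^sub>R p + (1/2) *\<^sub>R q \<in> K" using assms(1-3) by (intro convexD) auto
  then have "2 * r \<le> norm (p + q)" using assms(4) by (fastforce simp flip: scaleR_add_right)
  then have "(2 * r)\<^sup>2 \<le> (norm (p + q))\<^sup>2"
    using assms(5) by (intro power_mono) auto
  moreover have "(norm (p - q))\<^sup>2 + (norm (p + q))\<^sup>2 = 2 * (norm p)\<^sup>2 + 2 * (norm q)\<^sup>2"
    unfolding power2_norm_eq_inner by (simp add: inner_simps inner_commute)
  moreover have "(norm p)\<^sup>2 \<le> s\<^sup>2" "(norm q)\<^sup>2 \<le> s\<^sup>2"
    using assms(6,7) by (auto intro: power_mono)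
  ultimately show ?thesis by (simp add: power_mult_distrib right_diff_distrib)
qed

lemma convex_near_min_norm_dist_le:
  fixes p q :: "'a::real_inner"
  assumes "convex K" "p \<in> K" "q \<in> K" "\<forall>x\<in>K. R - e < norm x"
    and "norm p \<le> R + e" "norm q \<le> R + e" "0 \<le> R" "0 < e" "e \<le> 1"
  shows "dist p q \<le> sqrt (16 * (R + 1) * e)"
proof -
  define r where "r = max 0 (R - e)"
  have "(norm (p - q))\<^sup>2 \<le> 4 * ((R + e)\<^sup>2 - r\<^sup>2)"
    using assms unfolding r_def by (intro convex_near_min_norm_dist[of K]) force+
  also have "\<dots> = 4 * ((R + e - r) * (R + e + r))"
    by (simp add: power2_eq_square algebra_simps)
  also have "\<dots> \<le> 4 * ((2 * e) * (2 * (R + 1)))"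
    using assms(7-9) unfolding r_def by (intro mult_left_mono mult_mono) auto
  finally show ?thesis
    unfolding dist_norm by (intro real_le_rsqrt) (simp add: algebra_simps)
qed

lemma Cauchy_nested_shrinking:
  fixes p :: "nat \<Rightarrow> 'a::metric_space"
  assumes "decseq S" "\<And>n. p n \<in> S n" "\<And>n x y. x \<in> S n \<Longrightarrow> y \<in> S n \<Longrightarrow> dist x y \<le> \<delta> n"
    and "\<delta> \<longlonglongrightarrow> 0"
  shows "Cauchy p"
proof (rule metric_CauchyI)
  fix e :: real assume "0 < e"
  then have "\<forall>\<^sub>F n in sequentially. \<delta> n < e" by (rule order_tendstoD(2)[OF assms(4)])
  then obtain N where N: "\<delta> N < e" by (auto simp: eventually_sequentially)
  have "dist (p k) (p n) < e" if "N \<le> k" "N \<le> n" for k n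
  proof -
    have "p k \<in> S N" "p n \<in> S N" using assms(1,2) that by (auto simp: decseq_def)
    then show ?thesis using assms(3) N by (meson le_less_trans)
  qed
  then show "\<exists>N. \<forall>k\<ge>N. \<forall>n\<ge>N. dist (p k) (p n) < e" by blast
qed

lemma shrinking_sets_Inter_closed_nonempty:
  fixes N :: "nat \<Rightarrow> 'a::complete_space set"
  assumes "decseq N" "\<And>n. N n \<noteq> {}" and diam: "\<And>n x y. x \<in> N n \<Longrightarrow> y \<in> N n \<Longrightarrow> dist x y \<le> \<delta> n"
    and \<delta>: "\<delta> \<longlonglongrightarrow> 0" and closed: "\<And>K. K \<in> \<K> \<Longrightarrow> closed K"
    and meets: "\<And>n K. K \<in> \<K> \<Longrightarrow> N n \<inter> K \<noteq> {}"
  shows "\<Inter>\<K> \<noteq> {}"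
proof -
  have "\<forall>n. \<exists>p. p \<in> N n" using assms(2) by blast
  then obtain p where p: "p n \<in> N n" for n by metis
  have "Cauchy p" using \<open>decseq N\<close> p diam \<delta> by (rule Cauchy_nested_shrinking)
  then obtain x where x: "p \<longlonglongrightarrow> x" using Cauchy_convergent_iff convergent_def by blast
  have "x \<in> K" if K: "K \<in> \<K>" for K
  proof -
    have "\<forall>n. \<exists>q. q \<in> N n \<and> q \<in> K" using meets[OF K] by blast
    then obtain q where q: "q n \<in> N n" "q n \<in> K" for n by metis
    have "(\<lambda>n. dist (p n) x) \<longlonglongrightarrow> 0" using x by (rule tendsto_dist_iff[THEN iffD1])
    then have "(\<lambda>n. \<delta> n + dist (p n) x) \<longlonglongrightarrow> 0" using tendsto_add[OF \<delta>] by fastforce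
    then have "(\<lambda>n. dist (q n) x) \<longlonglongrightarrow> 0"
    proof (rule tendsto_sandwich[OF _ _ tendsto_const, rotated 2])
      have "dist (q n) x \<le> \<delta> n + dist (p n) x" for n
        using diam[OF q(1) p, of n] dist_triangle[of "q n" x "p n"] by linarith
      then show "\<forall>\<^sub>F n in sequentially. dist (q n) x \<le> \<delta> n + dist (p n) x" by simp
    qed simp
    then have "q \<longlonglongrightarrow> x" by (rule tendsto_dist_iff[THEN iffD2])
    then show "x \<in> K" using closed[OF K] q(2) closed_sequentially by blast
  qed
  then show ?thesis by blast
qed

lemma finite_Inter_min_norm_sup:
  fixes \<K> :: "'a::real_normed_vector set set"
  assumes fip: "\<And>\<G>. finite \<G> \<Longrightarrow> \<G> \<subseteq> \<K> \<Longrightarrow> \<Inter>\<G> \<noteq> {}" and "K0 \<in> \<K>" "bounded K0"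
  obtains R where "0 \<le> R"
    "\<And>\<G> e. finite \<G> \<Longrightarrow> \<G> \<subseteq> \<K> \<Longrightarrow> 0 < e \<Longrightarrow> \<exists>p\<in>\<Inter>\<G>. norm p < R + e"
    "\<And>e. 0 < e \<Longrightarrow> \<exists>\<G>. finite \<G> \<and> \<G> \<subseteq> \<K> \<and> (\<forall>p\<in>\<Inter>\<G>. R - e < norm p)"
proof -
  define fin where "fin \<G> \<longleftrightarrow> finite \<G> \<and> \<G> \<subseteq> \<K>" for \<G> :: "'a set set"
  define m where "m \<G> = Inf (norm ` \<Inter>\<G>)" for \<G> :: "'a set set"
  have bdd_below: "bdd_below (norm ` X)" for X :: "'a set" by (auto intro: bdd_belowI[of _ 0])
  have m_le: "m \<G> \<le> norm p" if "p \<in> \<Inter>\<G>" for \<G> p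
    unfolding m_def using that bdd_below by (intro cInf_lower) auto
  obtain B where B: "\<forall>x\<in>K0. norm x \<le> B" using \<open>bounded K0\<close> by (auto simp: bounded_iff)
  have m_le_B: "m \<G> \<le> B" if \<G>: "fin \<G>" for \<G>
  proof -
    obtain p where "p \<in> \<Inter>(insert K0 \<G>)" using fip[of "insert K0 \<G>"] \<G> \<open>K0 \<in> \<K>\<close>
      unfolding fin_def by auto
    then show ?thesis using m_le[of p \<G>] B by fastforce
  qed
  define R where "R = (SUP \<G>\<in>Collect fin. m \<G>)"
  have fin_ne: "Collect fin \<noteq> {}" unfolding fin_def by auto
  have bdd: "bdd_above (m ` Collect fin)" using m_le_B by (intro bdd_aboveI[of _ B]) auto
  have m_le_R: "m \<G> \<le> R" if "fin \<G>" for \<G>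
    unfolding R_def using that bdd by (intro cSUP_upper) auto
  show thesis
  proof
    have "0 \<le> m {}" unfolding m_def by (intro cInf_greatest) auto
    then show "0 \<le> R" using m_le_R[of "{}"] unfolding fin_def by simp
  next
    fix \<G> and e :: real assume "finite \<G>" "\<G> \<subseteq> \<K>" "0 < e"
    then have "Inf (norm ` \<Inter>\<G>) < R + e" using m_le_R[of \<G>] unfolding m_def fin_def by simp
    then show "\<exists>p\<in>\<Inter>\<G>. norm p < R + e"
      using cInf_less_iff[OF _ bdd_below] fip[OF \<open>finite \<G>\<close> \<open>\<G> \<subseteq> \<K>\<close>] by auto
  next
    fix e :: real assume "0 < e"
    then obtain \<G> where "fin \<G>" "R - e < m \<G>"
      using less_cSUP_iff[OF fin_ne bdd, of "R - e"] unfolding R_def by auto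
    then show "\<exists>\<G>. finite \<G> \<and> \<G> \<subseteq> \<K> \<and> (\<forall>p\<in>\<Inter>\<G>. R - e < norm p)"
      using m_le unfolding fin_def by (meson less_le_trans)
  qed
qed

lemma closed_convex_Inter_nonempty:
  fixes \<K> :: "'a::{real_inner, complete_space} set set"
  assumes closed: "\<And>K. K \<in> \<K> \<Longrightarrow> closed K" and convex: "\<And>K. K \<in> \<K> \<Longrightarrow> convex K"
    and fip: "\<And>\<G>. finite \<G> \<Longrightarrow> \<G> \<subseteq> \<K> \<Longrightarrow> \<Inter>\<G> \<noteq> {}"
    and "K0 \<in> \<K>" "bounded K0"
  shows "\<Inter>\<K> \<noteq> {}"
proof -
  obtain R where R: "0 \<le> R"
    "\<And>\<G> e. finite \<G> \<Longrightarrow> \<G> \<subseteq> \<K> \<Longrightarrow> 0 < e \<Longrightarrow> \<exists>p\<in>\<Inter>\<G>. norm p < R + e"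
    "\<And>e. 0 < e \<Longrightarrow> \<exists>\<G>. finite \<G> \<and> \<G> \<subseteq> \<K> \<and> (\<forall>p\<in>\<Inter>\<G>. R - e < norm p)"
    using finite_Inter_min_norm_sup[OF fip \<open>K0 \<in> \<K>\<close> \<open>bounded K0\<close>] by metis
  define \<epsilon> :: "nat \<Rightarrow> real" where "\<epsilon> n = inverse (real (Suc n))" for n
  have \<epsilon>: "0 < \<epsilon> n" "\<epsilon> n \<le> 1" for n unfolding \<epsilon>_def by (auto simp: inverse_le_1_iff)
  have "decseq \<epsilon>" unfolding \<epsilon>_def by (intro decseq_SucI) (simp add: le_imp_inverse_le)
  have "\<forall>n. \<exists>\<G>. finite \<G> \<and> \<G> \<subseteq> \<K> \<and> (\<forall>p\<in>\<Inter>\<G>. R - \<epsilon> n < norm p)"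
    using R(3) \<epsilon>(1) by blast
  then obtain \<S> where \<S>: "finite (\<S> n)" "\<S> n \<subseteq> \<K>" "\<forall>p\<in>\<Inter>(\<S> n). R - \<epsilon> n < norm p" for n
    by metis
  define \<T> where "\<T> n = (\<Union>k\<le>n. \<S> k)" for n
  have \<T>: "finite (\<T> n)" "\<T> n \<subseteq> \<K>" for n using \<S>(1,2) unfolding \<T>_def by auto
  have \<T>_norm: "R - \<epsilon> n < norm p" if "p \<in> \<Inter>(\<T> n)" for n p
  proof -
    have "p \<in> \<Inter>(\<S> n)" using that unfolding \<T>_def by auto
    then show ?thesis using \<S>(3) by blast
  qed
  define N where "N n = {p \<in> \<Inter>(\<T> n). norm p \<le> R + \<epsilon> n}" for n
  have "N n \<subseteq> N k" if "k \<le> n" for k n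
  proof -
    have "\<T> k \<subseteq> \<T> n" unfolding \<T>_def using that by (intro UN_mono) auto
    then show ?thesis using decseqD[OF \<open>decseq \<epsilon>\<close> that] unfolding N_def by auto
  qed
  then have "decseq N" by (simp add: decseq_def)
  have N_meets: "N n \<inter> K \<noteq> {}" if K: "K \<in> \<K>" for n K
  proof -
    obtain p where "p \<in> \<Inter>(insert K (\<T> n))" "norm p < R + \<epsilon> n"
      using R(2)[of "insert K (\<T> n)" "\<epsilon> n"] \<T>[of n] K \<epsilon>(1)[of n] by auto
    then have "p \<in> N n \<inter> K" unfolding N_def by auto
    then show ?thesis by blast
  qed
  define \<delta> where "\<delta> n = sqrt (16 * (R + 1) * \<epsilon> n)" for n
  have "\<epsilon> \<longlonglongrightarrow> 0" unfolding \<epsilon>_def by (rule LIMSEQ_inverse_real_of_nat)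
  then have "\<delta> \<longlonglongrightarrow> sqrt (16 * (R + 1) * 0)" unfolding \<delta>_def by (intro tendsto_intros)
  then have \<delta>: "\<delta> \<longlonglongrightarrow> 0" by simp
  have N_diam: "dist p q \<le> \<delta> n" if "p \<in> N n" "q \<in> N n" for p q n
  proof -
    have "convex (\<Inter>(\<T> n))" using \<T>(2) convex by (intro convex_Inter) blast
    moreover have "p \<in> \<Inter>(\<T> n)" "q \<in> \<Inter>(\<T> n)" "norm p \<le> R + \<epsilon> n" "norm q \<le> R + \<epsilon> n"
      using that unfolding N_def by auto
    ultimately show ?thesis
      unfolding \<delta>_def using \<T>_norm R(1) \<epsilon>[of n] by (intro convex_near_min_norm_dist_le) auto
  qed
  have "N n \<noteq> {}" for n using N_meets[OF \<open>K0 \<in> \<K>\<close>] by blast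
  then show ?thesis
    by (rule shrinking_sets_Inter_closed_nonempty[OF \<open>decseq N\<close> _ N_diam \<delta> closed N_meets])
qed

section \<open>Minty's theorem and the resolvent\<close>

lemma debrunner_flor:
  fixes z :: "'a::{real_inner, complete_space}"
  assumes "monotone_pairs G"
  shows "\<exists>p. \<forall>e\<in>G. 0 \<le> inner (p - fst e) (z - p - snd e)"
proof (cases "G = {}")
  case False
  define ball where "ball e = cball (minty_center z e) (minty_radius z e)" for e
  obtain e0 where "e0 \<in> G" using False by blast
  have "\<Inter>(ball ` G) \<noteq> {}"
  proof (rule closed_convex_Inter_nonempty[of _ "ball e0"])
    fix \<G> assume "finite \<G>" "\<G> \<subseteq> ball ` G"
    then obtain S where S: "S \<subseteq> G" "finite S" "\<G> = ball ` S"
      by (meson finite_subset_image)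
    moreover have "monotone_pairs S" using assms S(1) unfolding monotone_pairs_def by blast
    ultimately obtain p where "\<forall>e\<in>S. 0 \<le> inner (p - fst e) (z - p - snd e)"
      using debrunner_flor_finite by blast
    then have "p \<in> \<Inter>(ball ` S)" unfolding ball_def using mem_minty_cball_iff by blast
    then show "\<Inter>\<G> \<noteq> {}" unfolding S(3) by blast
  qed (use \<open>e0 \<in> G\<close> in \<open>auto simp: ball_def\<close>)
  then obtain p where "p \<in> \<Inter>(ball ` G)" by blast
  then show ?thesis unfolding ball_def using mem_minty_cball_iff by blast
qed simp

lemma maximal_monotone_memI:
  assumes max: "maximal_monotone A" and rel: "\<And>a b. b \<in> A a \<Longrightarrow> 0 \<le> inner (p - a) (u - b)"
  shows "u \<in> A p"
proof -
  have mono: "monotone_op A" using max unfolding maximal_monotone_def by blast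
  define B where "B y = (if y = p then insert u (A y) else A y)" for y
  have "monotone_op B"
    unfolding monotone_op_def
  proof (intro allI impI)
    fix x y v w assume "v \<in> B x" "w \<in> B y"
    then consider "v \<in> A x" "w \<in> A y" | "v \<in> A x" "y = p" "w = u" | "x = p" "v = u" "w \<in> A y"
      | "x = p" "v = u" "y = p" "w = u"
      unfolding B_def by (auto split: if_splits)
    then show "0 \<le> inner (x - y) (v - w)"
    proof cases
      case 1 then show ?thesis using mono unfolding monotone_op_def by blast
    next
      case 2
      have "inner (x - y) (v - w) = inner (p - x) (u - v)"
        using 2 by (simp add: inner_diff_left inner_diff_right algebra_simps)
      then show ?thesis using rel[OF 2(1)] by simp
    qed (use rel in auto)
  qed
  moreover have "\<forall>y. A y \<subseteq> B y" unfolding B_def by auto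
  ultimately have "B = A" using max unfolding maximal_monotone_def by blast
  then show ?thesis by (metis B_def insertI1)
qed

lemma maximal_monotone_minty:
  fixes A :: "'a::{real_inner, complete_space} \<Rightarrow> 'a set"
  assumes max: "maximal_monotone A" and "0 < g"
  obtains p u where "u \<in> A p" "x = p + g *\<^sub>R u"
proof -
  define G where "G = {(a, g *\<^sub>R b) | a b. b \<in> A a}"
  have "monotone_pairs G"
    using max \<open>0 < g\<close> unfolding G_def monotone_pairs_def maximal_monotone_def monotone_op_def
    by (auto simp flip: scaleR_diff_right)
  then obtain p where p: "\<forall>e\<in>G. 0 \<le> inner (p - fst e) (x - p - snd e)"
    using debrunner_flor by blast
  define u where "u = (1 / g) *\<^sub>R (x - p)"
  have "x - p - g *\<^sub>R b = g *\<^sub>R (u - b)" for b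
    unfolding u_def using \<open>0 < g\<close> by (simp add: algebra_simps)
  then have "0 \<le> inner (p - a) (u - b)" if "b \<in> A a" for a b
    using p[rule_format, of "(a, g *\<^sub>R b)"] that \<open>0 < g\<close> unfolding G_def
    by (auto simp: zero_le_mult_iff)
  then have "u \<in> A p" by (rule maximal_monotone_memI[OF max])
  moreover have "x = p + g *\<^sub>R u" unfolding u_def using \<open>0 < g\<close> by simp
  ultimately show thesis by (rule that)
qed

lemma resolvent_eqI:
  assumes mono: "monotone_op A" and "0 < g" and "u \<in> A p" and x: "x = p + g *\<^sub>R u"
  shows "resolvent g A x = p"
  unfolding resolvent_def
proof (rule the_equality)
  show "x \<in> (\<lambda>u. p + g *\<^sub>R u) ` A p" using assms(3) x by blast
next
  fix q assume "x \<in> (\<lambda>u. q + g *\<^sub>R u) ` A q"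
  then obtain v where v: "v \<in> A q" "x = q + g *\<^sub>R v" by blast
  have "g *\<^sub>R (v - u) = p - q" using x v(2) by (simp add: algebra_simps)
  then have "g * inner (q - p) (v - u) = - (norm (q - p))\<^sup>2"
    unfolding power2_norm_eq_inner by (metis inner_minus_right inner_scaleR_right minus_diff_eq)
  moreover have "0 \<le> g * inner (q - p) (v - u)"
    using mono v(1) assms(2,3) unfolding monotone_op_def by simp
  ultimately show "q = p" by simp
qed

lemma resolvent_nonexpansive:
  fixes A :: "'a::{real_inner, complete_space} \<Rightarrow> 'a set"
  assumes max: "maximal_monotone A" and "0 < g"
  shows "norm (resolvent g A x - resolvent g A y) \<le> norm (x - y)"
proof -
  have mono: "monotone_op A" using max unfolding maximal_monotone_def by blast
  obtain p u where u: "u \<in> A p" "x = p + g *\<^sub>R u" using maximal_monotone_minty[OF max \<open>0 < g\<close>] .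
  obtain q v where v: "v \<in> A q" "y = q + g *\<^sub>R v" using maximal_monotone_minty[OF max \<open>0 < g\<close>] .
  have "0 \<le> inner (p - q) (g *\<^sub>R (u - v))"
    using mono u(1) v(1) \<open>0 < g\<close> unfolding monotone_op_def by simp
  moreover have "(norm ((p - q) + g *\<^sub>R (u - v)))\<^sup>2
      = (norm (p - q))\<^sup>2 + 2 * inner (p - q) (g *\<^sub>R (u - v)) + (norm (g *\<^sub>R (u - v)))\<^sup>2"
    unfolding power2_norm_eq_inner by (simp only: inner_add_left inner_add_right inner_commute)
  ultimately have "(norm (p - q))\<^sup>2 \<le> (norm ((p - q) + g *\<^sub>R (u - v)))\<^sup>2"
    using zero_le_power2[of "norm (g *\<^sub>R (u - v))"] by linarith
  also have "(p - q) + g *\<^sub>R (u - v) = x - y" using u(2) v(2) by (simp add: algebra_simps)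
  finally have "norm (p - q) \<le> norm (x - y)" by (rule power2_le_imp_le) simp
  then show ?thesis using resolvent_eqI[OF mono \<open>0 < g\<close>] u v by simp
qed

section \<open>The Lipschitz constant\<close>

lemma Qtilde_diff:
  "Qtilde d g A x i - Qtilde d g A y i
     = (d / g) *\<^sub>R (x i - y i) + (1 - d / g) *\<^sub>R (resolvent g A (x 1) - resolvent g A (y 1))"
  unfolding Qtilde_def Q1_def by (cases "i = 1") (simp_all add: algebra_simps)

lemma L2_set_scaleR_add_const_le:
  fixes u :: "'i \<Rightarrow> 'a::real_normed_vector"
  assumes "0 \<le> t" and q: "norm q \<le> L2_set (\<lambda>i. norm (u i)) I"
  shows "L2_set (\<lambda>i. norm (t *\<^sub>R u i + s *\<^sub>R q)) I
    \<le> (t + \<bar>s\<bar> * sqrt (card I)) * L2_set (\<lambda>i. norm (u i)) I"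
proof -
  have "L2_set (\<lambda>i. norm (t *\<^sub>R u i + s *\<^sub>R q)) I \<le> L2_set (\<lambda>i. t * norm (u i) + \<bar>s\<bar> * norm q) I"
    using \<open>0 \<le> t\<close> by (intro L2_set_mono) (auto intro: norm_triangle_le)
  also have "\<dots> \<le> L2_set (\<lambda>i. t * norm (u i)) I + L2_set (\<lambda>i. \<bar>s\<bar> * norm q) I"
    by (rule L2_set_triangle_ineq)
  also have "\<dots> = t * L2_set (\<lambda>i. norm (u i)) I + sqrt (card I) * (\<bar>s\<bar> * norm q)"
    using \<open>0 \<le> t\<close> by (simp add: L2_set_right_distrib L2_set_constant)
  also have "\<dots> \<le> t * L2_set (\<lambda>i. norm (u i)) I + sqrt (card I) * (\<bar>s\<bar> * L2_set (\<lambda>i. norm (u i)) I)"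
    using q by (intro add_left_mono mult_left_mono) auto
  finally show ?thesis by (simp add: algebra_simps)
qed

lemma sqrt_ge_self:
  fixes t :: real
  assumes "0 \<le> t" "t \<le> 1"
  shows "t \<le> sqrt t"
proof -
  have "sqrt t * sqrt t \<le> sqrt t * 1" using assms by (intro mult_left_mono) auto
  then show ?thesis using assms by simp
qed

lemma add_abs_mult_sqrt_le:
  fixes t n :: real
  assumes "0 \<le> t" "0 \<le> n"
  shows "t + \<bar>1 - t\<bar> * sqrt n \<le> sqrt t + sqrt \<bar>1 - t\<bar> * max (sqrt n) (sqrt (2 * (n + 1)) * sqrt t)"
proof (cases "t \<le> 1")
  case True
  have "\<bar>1 - t\<bar> * sqrt n \<le> sqrt \<bar>1 - t\<bar> * max (sqrt n) (sqrt (2 * (n + 1)) * sqrt t)"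
    using True assms by (intro mult_mono sqrt_ge_self) auto
  moreover have "t \<le> sqrt t" using True assms by (intro sqrt_ge_self)
  ultimately show ?thesis by linarith
next
  case False
  define a b s where "a = sqrt t" and "b = sqrt (t - 1)" and "s = sqrt n"
  have ab: "1 \<le> a" "0 \<le> b" "b \<le> a" "0 \<le> s" unfolding a_def b_def s_def using False assms by auto
  have a2: "a\<^sup>2 = t" and b2: "b\<^sup>2 = t - 1" and s2: "s\<^sup>2 = n"
    unfolding a_def b_def s_def using False assms by auto
  have "(a - 1)\<^sup>2 \<le> b\<^sup>2" using a2 b2 ab(1) by (simp add: power2_eq_square algebra_simps)
  then have "a - 1 \<le> b" using ab(2) by (rule power2_le_imp_le)
  have "0 \<le> (s - 1)\<^sup>2" by simp
  then have "(1 + s)\<^sup>2 \<le> 2 * (n + 1)" using s2 by (simp add: power2_eq_square algebra_simps)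
  then have "1 + s \<le> sqrt (2 * (n + 1))" by (rule real_le_rsqrt)
  have "a + a * (a - 1) = t" using a2 by (simp add: power2_eq_square algebra_simps)
  moreover have "b * (b * s) = \<bar>1 - t\<bar> * s" using b2 False by (simp add: power2_eq_square)
  ultimately have "t + \<bar>1 - t\<bar> * s = a + a * (a - 1) + b * (b * s)" by linarith
  also have "\<dots> \<le> a + a * b + a * (b * s)"
    using \<open>a - 1 \<le> b\<close> ab by (intro add_mono add_left_mono mult_left_mono mult_right_mono) auto
  also have "\<dots> = a + b * (a * (1 + s))" by (simp add: algebra_simps)
  also have "\<dots> \<le> a + b * (a * sqrt (2 * (n + 1)))"
    using \<open>1 + s \<le> sqrt (2 * (n + 1))\<close> ab by (intro add_left_mono mult_left_mono) auto
  also have "\<dots> \<le> a + b * max s (sqrt (2 * (n + 1)) * a)"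
    using ab by (intro add_left_mono mult_left_mono) (auto simp: mult.commute)
  finally show ?thesis unfolding a_def b_def s_def using False by (simp add: abs_if)
qed

lemma Qtilde_constant_le:
  assumes "1 \<le> N" "0 < d" "0 < g"
  shows "d / g + \<bar>1 - d / g\<bar> * sqrt (real N - 1)
    \<le> sqrt d / sqrt g + sqrt \<bar>g - d\<bar> / sqrt g
      * max (sqrt (real N - 1)) (sqrt (2 * real N) * sqrt (d / g))"
proof -
  have "1 - d / g = (g - d) / g" using assms(3) by (simp add: field_simps)
  then have "\<bar>g - d\<bar> / g = \<bar>1 - d / g\<bar>" using assms(3) by (simp add: abs_divide)
  then have "sqrt \<bar>g - d\<bar> / sqrt g = sqrt \<bar>1 - d / g\<bar>" by (metis real_sqrt_divide)
  moreover have "2 * real N = 2 * ((real N - 1) + 1)" by simp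
  ultimately show ?thesis
    using add_abs_mult_sqrt_le[of "d / g" "real N - 1"] assms by (simp add: real_sqrt_divide)
qed

lemma Qtilde_lipschitz:
  fixes A :: "'a::{real_inner, complete_space} \<Rightarrow> 'a set"
  assumes "2 \<le> N" "maximal_monotone A" "0 < d" "0 < g"
  shows "prod_norm N (\<lambda>i. Qtilde d g A x i - Qtilde d g A y i)
    \<le> (d / g + \<bar>1 - d / g\<bar> * sqrt (real N - 1)) * prod_norm N (\<lambda>i. x i - y i)"
proof -
  define I where "I = {1..N - 1}"
  have I: "finite I" "1 \<in> I" "real (card I) = real N - 1"
    using \<open>2 \<le> N\<close> by (auto simp: I_def of_nat_diff)
  have prod_norm_eq: "prod_norm N f = L2_set (\<lambda>i. norm (f i)) I" for f :: "nat \<Rightarrow> 'a"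
    unfolding prod_norm_def L2_set_def I_def ..
  have "norm (resolvent g A (x 1) - resolvent g A (y 1)) \<le> L2_set (\<lambda>i. norm (x i - y i)) I"
    using resolvent_nonexpansive[OF assms(2,4)] member_le_L2_set[OF I(1,2)] by (rule order_trans)
  then have "L2_set (\<lambda>i. norm ((d / g) *\<^sub>R (x i - y i)
        + (1 - d / g) *\<^sub>R (resolvent g A (x 1) - resolvent g A (y 1)))) I
      \<le> (d / g + \<bar>1 - d / g\<bar> * sqrt (card I)) * L2_set (\<lambda>i. norm (x i - y i)) I"
    using assms(3,4) by (intro L2_set_scaleR_add_const_le) auto
  then show ?thesis unfolding prod_norm_eq Qtilde_diff I(3) .
qed

theorem lemma5p3:
  fixes A :: "'a::{real_inner, complete_space} \<Rightarrow> 'a set"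
    and N :: nat and d g :: real
  assumes "N \<ge> 2" and "maximal_monotone A" and "d > 0" and "g > 0"
  shows "\<forall>x y. prod_norm N (\<lambda>i. Qtilde d g A x i - Qtilde d g A y i)
           \<le> (sqrt d / sqrt g + sqrt \<bar>g - d\<bar> / sqrt g
                * max (sqrt (real N - 1)) (sqrt (2 * real N) * sqrt (d / g)))
             * prod_norm N (\<lambda>i. x i - y i)"
proof (intro allI)
  fix x y :: "nat \<Rightarrow> 'a"
  have "0 \<le> prod_norm N (\<lambda>i. x i - y i)" unfolding prod_norm_def by (simp add: sum_nonneg)
  moreover have "1 \<le> N" using assms(1) by simp
  ultimately show "prod_norm N (\<lambda>i. Qtilde d g A x i - Qtilde d g A y i)
      \<le> (sqrt d / sqrt g + sqrt \<bar>g - d\<bar> / sqrt g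
          * max (sqrt (real N - 1)) (sqrt (2 * real N) * sqrt (d / g)))
        * prod_norm N (\<lambda>i. x i - y i)"
    using Qtilde_lipschitz[OF assms, of x y] Qtilde_constant_le[of N d g] assms(3,4)
    by (meson mult_right_mono order_trans)
qed

end
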